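(* Let $(P,\trianglerighteq)$ be a transitive relation and let $(P,\succ)$ be a poset minimally induced by $(P,\trianglerighteq)$. Then the width of $(P,\succ)$ equals the width of $(P,\trianglerighteq)$.
   Context: A transitive relation is a pair $(P,\trianglerighteq)$ with $\trianglerighteq\subseteq P\times P$ transitive (not necessarily irreflexive). Two elements $x,y$ are incomparable with respect to a relation $R$ if neither $(x,y)\in R$ nor $(y,x)\in R$; the width of a transitive relation (or poset) is the maximum size of a set of mutually incomparable elements. A poset is a pair $(P,\succ)$ with $\succ$ irreflexive and transitive. A poset $(P,\succ)$ is induced by $(P,\trianglerighteq)$ if $\succ\subseteq\trianglerighteq$; it is minimally induced if, for every pair $(x,y)\in\trianglerighteq\setminus\succ$, the relation $\succ\cup\{(x,y)\}$ does not generate a valid partial order, i.e. the directed graph on $P$ with edge set $\succ\cup\{(x,y)\}$ contains a directed cycle. *)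

theory Defs
  imports Main "HOL-Library.Extended_Nat"
begin

definition transitive_rel :: "'a set \<Rightarrow> ('a \<times> 'a) set \<Rightarrow> bool" where
  "transitive_rel P R \<longleftrightarrow> R \<subseteq> P \<times> P \<and> trans R"

definition poset_rel :: "'a set \<Rightarrow> ('a \<times> 'a) set \<Rightarrow> bool" where
  "poset_rel P S \<longleftrightarrow> S \<subseteq> P \<times> P \<and> irrefl S \<and> trans S"

definition incomparable :: "('a \<times> 'a) set \<Rightarrow> 'a \<Rightarrow> 'a \<Rightarrow> bool" where
  "incomparable R x y \<longleftrightarrow> (x, y) \<notin> R \<and> (y, x) \<notin> R"

definition antichain_rel :: "'a set \<Rightarrow> ('a \<times> 'a) set \<Rightarrow> 'a set \<Rightarrow> bool" where
  "antichain_rel P R A \<longleftrightarrow> A \<subseteq> P \<and> (\<forall>x\<in>A. \<forall>y\<in>A. x \<noteq> y \<longrightarrow> incomparable R x y)"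

definition width :: "'a set \<Rightarrow> ('a \<times> 'a) set \<Rightarrow> enat" where
  "width P R = Sup {enat (card A) | A. finite A \<and> antichain_rel P R A}"

definition minimally_induced :: "'a set \<Rightarrow> ('a \<times> 'a) set \<Rightarrow> ('a \<times> 'a) set \<Rightarrow> bool" where
  "minimally_induced P R S \<longleftrightarrow> poset_rel P S \<and> S \<subseteq> R \<and>
     (\<forall>(x, y) \<in> R - S. \<not> acyclic (S \<union> {(x, y)}))"

end

theory Submission
  imports Defs
begin

text \<open>If adding a pair (x, y) of the transitive relation to the strict order S creates a
  directed cycle, the cycle closes through an S-path from y to x; as S is transitive, x and y
  are then already S-comparable (or equal). Hence S and the transitive relation have the same
  incomparable pairs of distinct elements, and therefore the same antichains.\<close>

lemma not_acyclic_insert_imp_converse: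
  assumes "trans S" "irrefl S" "\<not> acyclic (insert (x, y) S)"
  shows "x = y \<or> (y, x) \<in> S"
proof -
  from assms(3) obtain z where "(z, z) \<in> (insert (x, y) S)\<^sup>+"
    by (auto simp: acyclic_def)
  then have "(z, z) \<in> S\<^sup>+ \<or> (z, x) \<in> S\<^sup>* \<and> (y, z) \<in> S\<^sup>*"
    by (simp add: trancl_insert)
  moreover have "S\<^sup>+ = S"
    using assms(1) by (rule trancl_id)
  moreover have "S\<^sup>* = S\<^sup>="
    using \<open>S\<^sup>+ = S\<close> by (simp add: rtrancl_trancl_reflcl del: reflcl_trancl)
  ultimately have "(z, z) \<in> S \<or> (y, x) \<in> S\<^sup>="
    using assms(1) by (metis rtrancl_trans)
  with assms(2) show ?thesis
    by (auto simp: irrefl_def)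
qed

lemma minimally_induced_comparable:
  assumes "minimally_induced P R S" "(x, y) \<in> R" "x \<noteq> y"
  shows "(x, y) \<in> S \<or> (y, x) \<in> S"
proof (cases "(x, y) \<in> S")
  case False
  with assms(1,2) have "\<not> acyclic (insert (x, y) S)"
    by (auto simp: minimally_induced_def)
  moreover have "trans S" "irrefl S"
    using assms(1) by (auto simp: minimally_induced_def poset_rel_def)
  ultimately show ?thesis
    using assms(3) by (metis not_acyclic_insert_imp_converse)
qed simp

lemma minimally_induced_incomparable_iff:
  assumes "minimally_induced P R S" "x \<noteq> y"
  shows "incomparable S x y \<longleftrightarrow> incomparable R x y"
proof -
  have "S \<subseteq> R"
    using assms(1) by (simp add: minimally_induced_def)
  moreover have "(x, y) \<in> R \<or> (y, x) \<in> R \<Longrightarrow> (x, y) \<in> S \<or> (y, x) \<in> S"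
    using minimally_induced_comparable[OF assms(1)] assms(2) by blast
  ultimately show ?thesis
    by (auto simp: incomparable_def)
qed

lemma minimally_induced_antichain_rel_iff:
  assumes "minimally_induced P R S"
  shows "antichain_rel P S A \<longleftrightarrow> antichain_rel P R A"
  using minimally_induced_incomparable_iff[OF assms] by (auto simp: antichain_rel_def)

theorem lemma4:
  fixes P :: "'a set" and R S :: "('a \<times> 'a) set"
  assumes "transitive_rel P R"
    and "poset_rel P S"
    and "minimally_induced P R S"
  shows "width P S = width P R"
  unfolding width_def using minimally_induced_antichain_rel_iff[OF assms(3)] by simp

end
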